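(* Let $d\ge1$ and let $P$ be an essential pattern subgroup of $G(d)$. Then $\mathrm{Hdim}(G_P)=\frac{\log_2|P_{d-1}|}{2^{d-1}}$, where $P_{d-1}$ is the level-$(d-1)$ stabilizer of $P$.
   Context: Let $X=\{0,1\}$, $X^*$ the rooted binary tree of finite words, $G=\mathrm{Aut}(X^* )$, $G(d)$ the automorphism group of the finite tree of words of length $\le d$. Sections $g(wv)=g(w)g_w(v)$; $\pi_k$ restriction to words of length $\le k$; $K(n)=\pi_n(K)$; the level-$k$ stabilizer of a group consists of elements fixing all words of length $k$. A subgroup $P\le G(d)$ is an essential pattern group if for every $p\in P$ and $i\in\{0,1\}$ there is $q\in P$ with $\pi_{d-1}(q)=p_i$; $G_P=\{g\in G:\pi_d(g_w)\in P\ \forall w\in X^*\}$. Hausdorff dimension is taken with respect to the profinite metric; for closed $K\le G$, $\mathrm{Hdim}(K)=\liminf_{n\to\infty}\log_2|K(n)|/\log_2|G(n)|$. *)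

theory Defs
  imports "HOL-Library.Liminf_Limsup" "HOL-Library.Extended_Real" Complex_Main
begin

text \<open>Words over the alphabet X = {0,1} are modelled as bool lists.
  An automorphism of the rooted binary tree X^* is a bijection of words
  fixing the root and preserving the parent/child relation.\<close>

definition TreeAut :: "(bool list \<Rightarrow> bool list) set" where
  "TreeAut = {g. bij g \<and> g [] = [] \<and>
     (\<forall>w x. \<exists>y. g (w @ [x]) = g w @ [y])}"

text \<open>G(d): automorphisms of the finite tree of words of length at most d,
  extended by the identity on longer words.\<close>
definition FinAut :: "nat \<Rightarrow> (bool list \<Rightarrow> bool list) set" where
  "FinAut d = {g. bij g \<and> g [] = [] \<and>
     (\<forall>w. d < length w \<longrightarrow> g w = w) \<and>
     (\<forall>w x. length w < d \<longrightarrow> (\<exists>y. g (w @ [x]) = g w @ [y]))}"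

text \<open>Section g_w of g at w: g(wv) = g(w) g_w(v).\<close>
definition gsection :: "(bool list \<Rightarrow> bool list) \<Rightarrow> bool list \<Rightarrow> (bool list \<Rightarrow> bool list)" where
  "gsection g w = (\<lambda>v. drop (length w) (g (w @ v)))"

definition fsec :: "nat \<Rightarrow> (bool list \<Rightarrow> bool list) \<Rightarrow> bool list \<Rightarrow> (bool list \<Rightarrow> bool list)" where
  "fsec d p w = (\<lambda>v. if length v \<le> d - length w then drop (length w) (p (w @ v)) else v)"

definition restr :: "nat \<Rightarrow> (bool list \<Rightarrow> bool list) \<Rightarrow> (bool list \<Rightarrow> bool list)" where
  "restr k g = (\<lambda>v. if length v \<le> k then g v else v)"

definition is_subgroup_FinAut :: "nat \<Rightarrow> (bool list \<Rightarrow> bool list) set \<Rightarrow> bool" where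
  "is_subgroup_FinAut d P \<longleftrightarrow> P \<subseteq> FinAut d \<and> id \<in> P \<and>
     (\<forall>p\<in>P. \<forall>q\<in>P. p \<circ> q \<in> P) \<and> (\<forall>p\<in>P. inv p \<in> P)"

definition essential_pattern :: "nat \<Rightarrow> (bool list \<Rightarrow> bool list) set \<Rightarrow> bool" where
  "essential_pattern d P \<longleftrightarrow> is_subgroup_FinAut d P \<and>
     (\<forall>p\<in>P. \<forall>i::bool. \<exists>q\<in>P. restr (d - 1) q = fsec d p [i])"

definition G_P :: "nat \<Rightarrow> (bool list \<Rightarrow> bool list) set \<Rightarrow> (bool list \<Rightarrow> bool list) set" where
  "G_P d P = {g \<in> TreeAut. \<forall>w. restr d (gsection g w) \<in> P}"

definition level_stab :: "nat \<Rightarrow> (bool list \<Rightarrow> bool list) set \<Rightarrow> (bool list \<Rightarrow> bool list) set" where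
  "level_stab k P = {p \<in> P. \<forall>w. length w = k \<longrightarrow> p w = w}"

text \<open>Hausdorff dimension w.r.t. the profinite metric, via the liminf formula.\<close>
definition Hdim :: "(bool list \<Rightarrow> bool list) set \<Rightarrow> ereal" where
  "Hdim K = liminf (\<lambda>n. ereal (log 2 (real (card (restr n ` K))) / log 2 (real (card (FinAut n)))))"

end

theory Submission
  imports Defs "HOL-Library.FuncSet" "HOL-Real_Asymp.Real_Asymp"
begin

text \<open>Encode automorphisms by portraits \<open>s :: bool list \<Rightarrow> bool\<close>, where \<open>s u\<close> says whether
  the two children of \<open>u\<close> are swapped. For \<open>n \<ge> d\<close> the level-\<open>n\<close> truncations of \<open>G_P\<close> are
  exactly the depth-\<open>n\<close> portraits all of whose depth-\<open>d\<close> windows are portraits of patterns in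
  \<open>P\<close>; one direction is a compactness argument, which needs the essentiality of \<open>P\<close> to extend
  every such portrait by one level. Such an extension amounts to choosing, for each of the
  \<open>2^(n-d+1)\<close> windows newly reaching level \<open>n\<close>, a pattern with prescribed top \<open>d - 1\<close> levels.
  By essentiality these choices form a coset of the level-\<open>(d-1)\<close> stabilizer \<open>P\<^sub>d\<^sub>-\<^sub>1\<close>, so
  \<open>log |G_P(n)| = 2^(n-d+1) log |P\<^sub>d\<^sub>-\<^sub>1| + O(1)\<close>, whereas \<open>log |G(n)| = 2^n - 1\<close>.\<close>

fun aut :: "(bool list \<Rightarrow> bool) \<Rightarrow> bool list \<Rightarrow> bool list" where
  "aut s [] = []"
| "aut s (x # v) = (x \<noteq> s []) # aut (\<lambda>u. s (x # u)) v"

fun aut_inv :: "(bool list \<Rightarrow> bool) \<Rightarrow> bool list \<Rightarrow> bool list" where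
  "aut_inv s [] = []"
| "aut_inv s (y # v) = (y \<noteq> s []) # aut_inv (\<lambda>u. s ((y \<noteq> s []) # u)) v"

lemma length_aut [simp]: "length (aut s v) = length v"
  by (induct v arbitrary: s) auto

lemma length_aut_inv [simp]: "length (aut_inv s v) = length v"
  by (induct v arbitrary: s) auto

lemma aut_append: "aut s (w @ v) = aut s w @ aut (\<lambda>u. s (w @ u)) v"
  by (induct w arbitrary: s) auto

lemma aut_snoc: "aut s (v @ [x]) = aut s v @ [x \<noteq> s v]"
  by (simp add: aut_append)

lemma aut_aut_inv: "aut s (aut_inv s v) = v"
  by (induct v arbitrary: s) auto

lemma aut_inv_aut: "aut_inv s (aut s v) = v"
proof (induct v arbitrary: s)
  case (Cons a v)
  then show ?case by (cases a; cases "s []") simp_all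
qed simp

lemma bij_aut: "bij (aut s)"
  by (rule o_bij[of "aut_inv s"]) (auto simp: fun_eq_iff aut_aut_inv aut_inv_aut)

lemma aut_in_TreeAut: "aut s \<in> TreeAut"
  unfolding TreeAut_def using bij_aut aut_snoc by auto

lemma aut_cong: "(\<And>u. length u < length v \<Longrightarrow> s u = t u) \<Longrightarrow> aut s v = aut t v"
  by (induct v rule: rev_induct) (auto simp: aut_snoc)

lemma aut_eq_upto_iff:
  "(\<forall>v. length v \<le> n \<longrightarrow> aut s v = aut t v) \<longleftrightarrow> (\<forall>u. length u < n \<longrightarrow> s u = t u)"
proof
  assume "\<forall>v. length v \<le> n \<longrightarrow> aut s v = aut t v"
  then have "aut s (u @ [False]) = aut t (u @ [False])" if "length u < n" for u
    using that by simp
  then show "\<forall>u. length u < n \<longrightarrow> s u = t u" by (simp add: aut_snoc)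
qed (auto intro!: aut_cong)

lemma aut_fixes_prefix: "aut s (v @ u) = v @ u \<Longrightarrow> aut s v = v"
  by (simp add: aut_append)

definition portrait :: "(bool list \<Rightarrow> bool list) \<Rightarrow> bool list \<Rightarrow> bool" where
  "portrait g w = g (w @ [False]) ! length w"

lemma eq_aut_portrait_upto:
  assumes "g [] = []" and "\<And>w x. length w < n \<Longrightarrow> \<exists>y. g (w @ [x]) = g w @ [y]"
    and "inj g" and "length v \<le> n"
  shows "g v = aut (portrait g) v"
  using \<open>length v \<le> n\<close>
proof (induct v rule: rev_induct)
  case Nil then show ?case using assms(1) by simp
next
  case (snoc x v)
  then have IH: "g v = aut (portrait g) v" and "length v < n" by simp_all
  then obtain y0 y1 where y0: "g (v @ [False]) = g v @ [y0]" and y1: "g (v @ [True]) = g v @ [y1]"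
    using assms(2) by meson
  have "portrait g v = y0" unfolding portrait_def y0 using IH by (simp add: nth_append)
  moreover have "y0 \<noteq> y1" using y0 y1 injD[OF \<open>inj g\<close>, of "v @ [False]" "v @ [True]"] by auto
  ultimately show ?case using y0 y1 IH by (cases x) (auto simp: aut_snoc)
qed

lemma TreeAut_eq_range_aut: "TreeAut = range aut"
proof -
  have "g = aut (portrait g)" if "g \<in> TreeAut" for g
    using that by (intro ext eq_aut_portrait_upto) (auto simp: TreeAut_def bij_def)
  then show ?thesis using aut_in_TreeAut by blast
qed

definition level_aut :: "nat \<Rightarrow> (bool list \<Rightarrow> bool) \<Rightarrow> bool list \<Rightarrow> bool list" where
  "level_aut n s = restr n (aut s)"

definition portraits_below :: "nat \<Rightarrow> (bool list \<Rightarrow> bool) set" where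
  "portraits_below n = {t. \<forall>u. n \<le> length u \<longrightarrow> \<not> t u}"

definition prune :: "nat \<Rightarrow> (bool list \<Rightarrow> bool) \<Rightarrow> bool list \<Rightarrow> bool" where
  "prune n s = (\<lambda>u. length u < n \<and> s u)"

lemma level_aut_eq_iff: "level_aut n s = level_aut n t \<longleftrightarrow> (\<forall>u. length u < n \<longrightarrow> s u = t u)"
proof -
  have "level_aut n s = level_aut n t \<longleftrightarrow> (\<forall>v. length v \<le> n \<longrightarrow> aut s v = aut t v)"
    unfolding level_aut_def restr_def fun_eq_iff by auto
  then show ?thesis using aut_eq_upto_iff by simp
qed

lemma level_aut_eq_upto_iff:
  assumes "k \<le> n"
  shows "(\<forall>v. length v \<le> k \<longrightarrow> level_aut n s v = level_aut n t v) \<longleftrightarrow> (\<forall>u. length u < k \<longrightarrow> s u = t u)"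
proof -
  have "(\<forall>v. length v \<le> k \<longrightarrow> level_aut n s v = level_aut n t v) \<longleftrightarrow> (\<forall>v. length v \<le> k \<longrightarrow> aut s v = aut t v)"
    using assms by (auto simp: level_aut_def restr_def)
  then show ?thesis by (simp only: aut_eq_upto_iff)
qed

lemma prune_in_portraits_below [simp]: "prune n s \<in> portraits_below n"
  by (simp add: prune_def portraits_below_def)

lemma prune_id: "t \<in> portraits_below n \<Longrightarrow> prune n t = t"
  unfolding portraits_below_def prune_def fun_eq_iff using not_less by blast

lemma prune_prune: "m \<le> n \<Longrightarrow> prune m (prune n s) = prune m s"
  by (auto simp: prune_def fun_eq_iff)

lemma level_aut_prune [simp]: "level_aut n (prune n s) = level_aut n s"
  by (simp add: level_aut_eq_iff prune_def)

lemma inj_on_level_aut: "inj_on (level_aut n) (portraits_below n)"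
proof (rule inj_onI)
  fix s t assume s: "s \<in> portraits_below n" and t: "t \<in> portraits_below n"
    and "level_aut n s = level_aut n t"
  then have "\<forall>u. length u < n \<longrightarrow> s u = t u" by (simp add: level_aut_eq_iff)
  then have "prune n s = prune n t" by (auto simp: prune_def fun_eq_iff)
  then show "s = t" using prune_id[OF s] prune_id[OF t] by simp
qed

lemma bij_level_aut: "bij (level_aut n s)"
proof -
  have "level_aut n s \<circ> restr n (aut_inv s) = id" "restr n (aut_inv s) \<circ> level_aut n s = id"
    by (auto simp: fun_eq_iff level_aut_def restr_def aut_aut_inv aut_inv_aut)
  then show ?thesis using o_bij by blast
qed

lemma level_aut_in_FinAut: "level_aut n s \<in> FinAut n"
  unfolding FinAut_def using bij_level_aut[of n s]
  by (auto simp: level_aut_def restr_def aut_snoc)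

lemma FinAut_eq_level_aut:
  assumes p: "p \<in> FinAut n"
  shows "p = level_aut n (prune n (portrait p))"
proof -
  have "p v = aut (portrait p) v" if "length v \<le> n" for v
    using p that by (intro eq_aut_portrait_upto[of p n]) (auto simp: FinAut_def bij_def)
  then show ?thesis using p unfolding level_aut_prune
    by (auto simp: FinAut_def level_aut_def restr_def fun_eq_iff)
qed

lemma FinAut_eq_image: "FinAut n = level_aut n ` portraits_below n"
  using FinAut_eq_level_aut level_aut_in_FinAut prune_in_portraits_below by blast

lemma FinAut_fixes_below:
  assumes "p \<in> FinAut n" and "k \<le> n" and "\<forall>w. length w = k \<longrightarrow> p w = w" and "length v \<le> k"
  shows "p v = v"
proof -
  obtain t where p: "p = level_aut n t" using assms(1) FinAut_eq_image by blast
  let ?w = "v @ replicate (k - length v) False"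
  have "aut t ?w = ?w" using assms p by (simp add: level_aut_def restr_def)
  then have "aut t v = v" by (rule aut_fixes_prefix)
  then show ?thesis using assms p by (simp add: level_aut_def restr_def)
qed

lemma finite_words_of_length: "finite {w :: bool list. length w = n}"
  using finite_lists_length_eq[of "UNIV :: bool set" n] by simp

lemma card_words_of_length: "card {w :: bool list. length w = n} = 2 ^ n"
  using card_lists_length_eq[of "UNIV :: bool set" n] by simp

definition words_below :: "nat \<Rightarrow> bool list set" where
  "words_below n = {w. length w < n}"

lemma words_below_Suc: "words_below (Suc n) = words_below n \<union> {w. length w = n}"
  by (auto simp: words_below_def)

lemma finite_words_below: "finite (words_below n)"
  by (induct n) (simp_all add: words_below_Suc finite_words_of_length, simp add: words_below_def)

lemma card_words_below: "card (words_below n) = 2 ^ n - 1"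
proof (induct n)
  case (Suc n)
  have "card (words_below (Suc n)) = card (words_below n) + card {w :: bool list. length w = n}"
    unfolding words_below_Suc
    by (rule card_Un_disjoint) (simp_all add: finite_words_below finite_words_of_length, auto simp: words_below_def)
  then show ?case using Suc card_words_of_length[of n] by simp
qed (simp add: words_below_def)

lemma portraits_below_eq: "portraits_below n = (\<lambda>S u. u \<in> S) ` Pow (words_below n)"
proof -
  have "t = (\<lambda>u. u \<in> {u \<in> words_below n. t u})" if "t \<in> portraits_below n" for t
    using that unfolding portraits_below_def words_below_def fun_eq_iff using not_less by blast
  moreover have "{u \<in> words_below n. t u} \<in> Pow (words_below n)" for t by blast
  ultimately have "portraits_below n \<subseteq> (\<lambda>S u. u \<in> S) ` Pow (words_below n)" by blast
  moreover have "(\<lambda>S u. u \<in> S) ` Pow (words_below n) \<subseteq> portraits_below n"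
    by (auto simp: portraits_below_def words_below_def)
  ultimately show ?thesis by blast
qed

lemma finite_portraits_below: "finite (portraits_below n)"
  by (simp add: portraits_below_eq finite_words_below)

lemma card_FinAut: "card (FinAut n) = 2 ^ (2 ^ n - 1)"
proof -
  have "inj_on (\<lambda>S u. u \<in> S) A" for A :: "bool list set set"
    by (auto simp: inj_on_def fun_eq_iff)
  then have "card (portraits_below n) = 2 ^ (2 ^ n - 1)"
    by (simp add: portraits_below_eq card_image card_Pow finite_words_below card_words_below)
  then show ?thesis by (simp add: FinAut_eq_image card_image inj_on_level_aut)
qed

lemma finite_FinAut: "finite (FinAut n)"
  by (simp add: FinAut_eq_image finite_portraits_below)

definition psection :: "bool list \<Rightarrow> (bool list \<Rightarrow> bool) \<Rightarrow> bool list \<Rightarrow> bool" where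
  "psection w s = (\<lambda>u. s (w @ u))"

lemma gsection_aut: "gsection (aut s) w = aut (psection w s)"
  by (simp add: gsection_def aut_append psection_def fun_eq_iff)

lemma prune_psection_prune:
  "length w + k \<le> n \<Longrightarrow> prune k (psection w (prune n s)) = prune k (psection w s)"
  by (auto simp: prune_def psection_def fun_eq_iff)

lemma coherent_limit:
  assumes "\<And>j. seq j \<in> portraits_below (n + j)"
    and "\<And>j. prune (n + j) (seq (Suc j)) = seq j"
  shows "prune (n + j) (\<lambda>u. seq (Suc (length u)) u) = seq j"
proof -
  have coh: "prune (n + j) (seq (j + i)) = seq j" for i j
  proof (induct i)
    case (Suc i)
    have "prune (n + j) (seq (j + Suc i)) = prune (n + j) (prune (n + (j + i)) (seq (Suc (j + i))))"
      by (simp add: prune_prune)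
    then show ?case using assms(2) Suc by simp
  qed (simp add: prune_id assms(1))
  show ?thesis
  proof
    fix u :: "bool list"
    show "prune (n + j) (\<lambda>u. seq (Suc (length u)) u) u = seq j u"
    proof (cases "length u < n + j")
      case True
      then show ?thesis
        using fun_cong[OF coh[of j "Suc (length u)"], of u] fun_cong[OF coh[of "Suc (length u)" j], of u]
        by (simp add: prune_def add.commute)
    next
      case False
      then show ?thesis using assms(1)[of j] by (simp add: prune_def portraits_below_def)
    qed
  qed
qed

lemma card_level_coset:
  assumes P: "is_subgroup_FinAut n P" and "k \<le> n" and p0: "p0 \<in> P"
  shows "card {p \<in> P. \<forall>v. length v \<le> k \<longrightarrow> p v = p0 v} = card (level_stab k P)"
proof -
  have sub: "P \<subseteq> FinAut n" and comp: "\<And>p q. p \<in> P \<Longrightarrow> q \<in> P \<Longrightarrow> p \<circ> q \<in> P"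
    and inv: "\<And>p. p \<in> P \<Longrightarrow> inv p \<in> P"
    using P by (auto simp: is_subgroup_FinAut_def)
  have "bij p0" using p0 sub by (auto simp: FinAut_def)
  then have ip: "inv p0 (p0 x) = x" and pi: "p0 (inv p0 x) = x" for x
    by (simp_all add: bij_is_inj bij_is_surj surj_f_inv_f)
  have fixes_below: "q \<in> level_stab k P \<longleftrightarrow> q \<in> P \<and> (\<forall>v. length v \<le> k \<longrightarrow> q v = v)" for q
    using FinAut_fixes_below[of q n k] sub \<open>k \<le> n\<close> by (auto simp: level_stab_def)
  have "bij_betw (\<lambda>p. inv p0 \<circ> p) {p \<in> P. \<forall>v. length v \<le> k \<longrightarrow> p v = p0 v} (level_stab k P)"
  proof (rule bij_betw_byWitness[where f' = "\<lambda>q. p0 \<circ> q"])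
    show "(\<lambda>p. inv p0 \<circ> p) ` {p \<in> P. \<forall>v. length v \<le> k \<longrightarrow> p v = p0 v} \<subseteq> level_stab k P"
      using comp inv p0 ip by (auto simp: fixes_below)
    show "(\<lambda>q. p0 \<circ> q) ` level_stab k P \<subseteq> {p \<in> P. \<forall>v. length v \<le> k \<longrightarrow> p v = p0 v}"
      using comp p0 by (auto simp: fixes_below)
  qed (auto simp: fun_eq_iff ip pi)
  then show ?thesis by (rule bij_betw_same_card)
qed

lemma ratio_limit:
  "(\<lambda>n::nat. (C + (2 ^ n / K - 2) * L) / (2 ^ n - 1 :: real)) \<longlonglongrightarrow> L / K"
proof -
  have "(\<lambda>n::nat. (C - 2 * L) * (1 / (2 ^ n - 1)) + L / K * (2 ^ n / (2 ^ n - 1 :: real)))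
      \<longlonglongrightarrow> (C - 2 * L) * 0 + L / K * 1"
    by (intro tendsto_intros; real_asymp)
  moreover have "(C + (x / K - 2) * L) / (x - 1) = (C - 2 * L) * (1 / (x - 1)) + L / K * (x / (x - 1))"
    for x :: real
    by (simp add: add_divide_distrib diff_divide_distrib algebra_simps)
  ultimately show ?thesis by simp
qed

lemma Hdim_eq_of_card_restr:
  assumes "c > 0" and "a > 0"
    and card: "\<And>n. k < n \<Longrightarrow> card (restr n ` K) = c * a ^ (2 ^ (n - k) - 2)"
  shows "Hdim K = ereal (log 2 a / 2 ^ k)"
proof -
  let ?f = "\<lambda>n. log 2 (real (card (restr n ` K))) / log 2 (real (card (FinAut n)))"
  have "?f n = (log 2 c + (2 ^ n / 2 ^ k - 2) * log 2 a) / (2 ^ n - 1)" if "k < n" for n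
  proof -
    define m where "m = 2 ^ (n - k) - (2 :: nat)"
    have "(2 :: nat) ^ 1 \<le> 2 ^ (n - k)" using that by (intro power_increasing) auto
    then have "real m = 2 ^ (n - k) - 2" by (simp add: m_def of_nat_diff)
    also have "(2 :: real) ^ (n - k) = 2 ^ n / 2 ^ k" using that by (simp add: power_diff)
    finally have m: "real m = 2 ^ n / 2 ^ k - 2" .
    have "log 2 (real (card (restr n ` K))) = log 2 c + real m * log 2 a"
      using assms card[OF that, folded m_def] by (simp add: log_mult log_nat_power)
    moreover have "log 2 (real (card (FinAut n))) = 2 ^ n - 1"
      by (simp add: card_FinAut log_nat_power of_nat_diff)
    ultimately show ?thesis using m by (simp only:)
  qed
  then have "\<forall>\<^sub>F n in sequentially. ?f n = (log 2 c + (2 ^ n / 2 ^ k - 2) * log 2 a) / (2 ^ n - 1)"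
    by (intro eventually_sequentiallyI[of "Suc k"]) simp
  then have "?f \<longlonglongrightarrow> log 2 a / 2 ^ k"
    using ratio_limit by (rule tendsto_cong[THEN iffD2])
  then show ?thesis unfolding Hdim_def by (simp add: tendsto_ereal lim_imp_Liminf)
qed

locale essential_pattern_group =
  fixes d :: nat and P :: "(bool list \<Rightarrow> bool list) set"
  assumes d_pos: "1 \<le> d" and essential: "essential_pattern d P"
begin

lemma subgroup: "is_subgroup_FinAut d P"
  using essential by (simp add: essential_pattern_def)

definition patterns :: "(bool list \<Rightarrow> bool) set" where
  "patterns = {t \<in> portraits_below d. level_aut d t \<in> P}"

abbreviation window :: "bool list \<Rightarrow> (bool list \<Rightarrow> bool) \<Rightarrow> bool list \<Rightarrow> bool" where
  "window w s \<equiv> prune d (psection w s)"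

definition GP_portraits :: "(bool list \<Rightarrow> bool) set" where
  "GP_portraits = {s. \<forall>w. window w s \<in> patterns}"

definition admissible :: "nat \<Rightarrow> (bool list \<Rightarrow> bool) set" where
  "admissible n = {t \<in> portraits_below n. \<forall>w. length w + d \<le> n \<longrightarrow> window w t \<in> patterns}"

abbreviation stab_card :: nat where
  "stab_card \<equiv> card (level_stab (d - 1) P)"

lemma P_eq_image: "P = level_aut d ` patterns"
proof -
  have "p \<in> level_aut d ` patterns" if "p \<in> P" for p
  proof -
    have "P \<subseteq> FinAut d" using subgroup by (simp add: is_subgroup_FinAut_def)
    then have "p \<in> FinAut d" using that by blast
    then have "level_aut d (prune d (portrait p)) = p" by (rule FinAut_eq_level_aut[symmetric])
    moreover have "prune d (portrait p) \<in> patterns" using that calculation by (simp add: patterns_def)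
    ultimately show ?thesis by (metis image_eqI)
  qed
  moreover have "level_aut d ` patterns \<subseteq> P" by (auto simp: patterns_def)
  ultimately show ?thesis by blast
qed

lemma patterns_essential:
  fixes i :: bool
  assumes t: "t \<in> patterns"
  shows "\<exists>r\<in>patterns. \<forall>u. length u < d - 1 \<longrightarrow> r u = t (i # u)"
proof -
  obtain q where "q \<in> P" and q: "restr (d - 1) q = fsec d (level_aut d t) [i]"
    using essential t unfolding essential_pattern_def patterns_def by blast
  then obtain r where r: "r \<in> patterns" and qr: "q = level_aut d r" using P_eq_image by blast
  have "\<forall>v. length v \<le> d - 1 \<longrightarrow> aut r v = aut (\<lambda>u. t (i # u)) v"
  proof (intro allI impI)
    fix v :: "bool list" assume "length v \<le> d - 1"
    moreover have "length v \<le> d" and "Suc (length v) \<le> d" using calculation d_pos by auto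
    ultimately show "aut r v = aut (\<lambda>u. t (i # u)) v"
      using fun_cong[OF q, of v] by (simp add: restr_def fsec_def qr level_aut_def)
  qed
  then have "\<forall>u. length u < d - 1 \<longrightarrow> r u = t (i # u)" by (simp only: aut_eq_upto_iff)
  then show ?thesis using r by blast
qed

lemma G_P_eq: "G_P d P = aut ` GP_portraits"
proof -
  have "restr d (gsection (aut s) w) \<in> P \<longleftrightarrow> window w s \<in> patterns" for s w
    by (simp add: gsection_aut patterns_def level_aut_def[symmetric])
  then show ?thesis unfolding G_P_def GP_portraits_def TreeAut_eq_range_aut by auto
qed

lemma card_restr_G_P_eq: "card (restr n ` G_P d P) = card (prune n ` GP_portraits)"
proof -
  have "restr n ` G_P d P = level_aut n ` prune n ` GP_portraits"
    unfolding G_P_eq image_image level_aut_prune by (simp add: level_aut_def)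
  moreover have "inj_on (level_aut n) (prune n ` GP_portraits)"
    using inj_on_level_aut by (rule inj_on_subset) auto
  ultimately show ?thesis by (simp add: card_image)
qed

lemma prune_GP_portraits_subset: "prune n ` GP_portraits \<subseteq> admissible n"
  by (auto simp: admissible_def GP_portraits_def prune_psection_prune)

lemma finite_admissible: "finite (admissible n)"
  using finite_portraits_below by (rule finite_subset[rotated]) (auto simp: admissible_def)

lemma zero_in_admissible: "(\<lambda>_. False) \<in> admissible n"
proof -
  have "level_aut d (\<lambda>_. False) = id"
  proof
    show "level_aut d (\<lambda>_. False) v = id v" for v
      by (induct v) (auto simp: level_aut_def restr_def)
  qed
  moreover have "id \<in> P" using subgroup by (simp add: is_subgroup_FinAut_def)
  ultimately show ?thesis
    by (simp add: admissible_def patterns_def portraits_below_def prune_def psection_def)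
qed

lemma card_admissible_pos: "card (admissible n) > 0"
  using zero_in_admissible finite_admissible by (auto simp: card_gt_0_iff)

lemma stab_card_pos: "stab_card > 0"
proof -
  have "P \<subseteq> FinAut d" and "id \<in> P" using subgroup by (auto simp: is_subgroup_FinAut_def)
  then have "finite (level_stab (d - 1) P)" and "id \<in> level_stab (d - 1) P"
    using finite_FinAut by (auto simp: level_stab_def intro: finite_subset)
  then show ?thesis by (auto simp: card_gt_0_iff)
qed

lemma card_patterns_agreeing:
  assumes r: "r \<in> patterns"
  shows "card {s \<in> patterns. \<forall>u. length u < d - 1 \<longrightarrow> s u = r u} = stab_card"
proof -
  let ?S = "{s \<in> patterns. \<forall>u. length u < d - 1 \<longrightarrow> s u = r u}"
  let ?C = "{p \<in> P. \<forall>v. length v \<le> d - 1 \<longrightarrow> p v = level_aut d r v}"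
  have agree: "(\<forall>v. length v \<le> d - 1 \<longrightarrow> level_aut d s v = level_aut d r v)
      \<longleftrightarrow> (\<forall>u. length u < d - 1 \<longrightarrow> s u = r u)" for s
    by (simp add: level_aut_eq_upto_iff)
  have image: "level_aut d ` ?S = ?C"
  proof
    show "level_aut d ` ?S \<subseteq> ?C" using agree by (auto simp: patterns_def)
    show "?C \<subseteq> level_aut d ` ?S"
    proof
      fix p assume p: "p \<in> ?C"
      then have "p \<in> level_aut d ` patterns" by (simp add: P_eq_image[symmetric])
      then obtain s where "s \<in> patterns" and "p = level_aut d s" by blast
      then show "p \<in> level_aut d ` ?S" using p agree by auto
    qed
  qed
  have "inj_on (level_aut d) ?S"
    using inj_on_level_aut by (rule inj_on_subset) (auto simp: patterns_def)
  then have "card ?S = card (level_aut d ` ?S)" by (rule card_image[symmetric])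
  also have "\<dots> = card ?C" by (simp only: image)
  also have "\<dots> = stab_card"
    using card_level_coset[OF subgroup, of "d - 1" "level_aut d r"] r by (simp add: patterns_def)
  finally show ?thesis .
qed

definition new_window_roots :: "nat \<Rightarrow> bool list set" where
  "new_window_roots n = {w. length w + d = Suc n}"

definition window_choices :: "(bool list \<Rightarrow> bool) \<Rightarrow> bool list \<Rightarrow> (bool list \<Rightarrow> bool) set" where
  "window_choices t w = {r \<in> patterns. \<forall>u. length u < d - 1 \<longrightarrow> r u = t (w @ u)}"

definition extensions :: "nat \<Rightarrow> (bool list \<Rightarrow> bool) \<Rightarrow> (bool list \<Rightarrow> bool) set" where
  "extensions n t = {t' \<in> admissible (Suc n). prune n t' = t}"

text \<open>Level \<open>n\<close> of \<open>glue n t c\<close> is the bottom level of the windows \<open>c w\<close>, \<open>w \<in> new_window_roots n\<close>.\<close>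

definition glue :: "nat \<Rightarrow> (bool list \<Rightarrow> bool) \<Rightarrow> (bool list \<Rightarrow> bool list \<Rightarrow> bool) \<Rightarrow> bool list \<Rightarrow> bool" where
  "glue n t c = (\<lambda>u. if length u < n then t u
     else length u = n \<and> c (take (Suc n - d) u) (drop (Suc n - d) u))"

lemma card_new_window_roots:
  assumes "d \<le> Suc n"
  shows "card (new_window_roots n) = 2 ^ (Suc n - d)"
proof -
  have "new_window_roots n = {w. length w = Suc n - d}"
    using assms by (auto simp: new_window_roots_def)
  then show ?thesis by (simp add: card_words_of_length)
qed

lemma finite_new_window_roots: "finite (new_window_roots n)"
  using finite_words_of_length[of "Suc n - d"]
  by (rule finite_subset[rotated]) (auto simp: new_window_roots_def)

lemma window_glue:
  assumes "d \<le> n" and c: "c \<in> Pi\<^sub>E (new_window_roots n) (window_choices t)"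
    and w: "w \<in> new_window_roots n"
  shows "window w (glue n t c) = c w"
proof
  fix v :: "bool list"
  have lw: "length w + d = Suc n" using w by (simp add: new_window_roots_def)
  have cw: "c w \<in> window_choices t w" using c w by auto
  show "window w (glue n t c) v = c w v"
  proof (cases "length v < d - 1")
    case True
    then have "length w + length v < n" and "length v < d" using lw by auto
    then show ?thesis using True cw by (simp add: prune_def psection_def glue_def window_choices_def)
  next
    case not_top: False
    show ?thesis
    proof (cases "length v < d")
      case True
      then have "length w + length v = n" and "Suc n - d = length w" using not_top lw by auto
      then show ?thesis using True by (simp add: prune_def psection_def glue_def)
    next
      case False
      then have "\<not> c w v" using cw by (simp add: window_choices_def patterns_def portraits_below_def)
      then show ?thesis using False by (simp add: prune_def)
    qed
  qed
qed

lemma glue_in_extensions: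
  assumes n: "d \<le> n" and t: "t \<in> admissible n"
    and c: "c \<in> Pi\<^sub>E (new_window_roots n) (window_choices t)"
  shows "glue n t c \<in> extensions n t"
proof -
  have "window w (glue n t c) \<in> patterns" if "length w + d \<le> Suc n" for w
  proof (cases "length w + d \<le> n")
    case True
    then have "window w (glue n t c) = window w t"
      by (auto simp: prune_def psection_def glue_def fun_eq_iff)
    then show ?thesis using t True by (simp add: admissible_def)
  next
    case False
    then have w: "w \<in> new_window_roots n" using that by (simp add: new_window_roots_def)
    then have "c w \<in> patterns" using c by (auto simp: window_choices_def)
    then show ?thesis using window_glue[OF n c w] by simp
  qed
  moreover have "prune n (glue n t c) = t"
    using t by (auto simp: prune_def glue_def admissible_def portraits_below_def fun_eq_iff)
  ultimately show ?thesis by (auto simp: extensions_def admissible_def portraits_below_def glue_def)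
qed

lemma window_in_window_choices:
  assumes "d \<le> n" and t': "t' \<in> extensions n t" and w: "w \<in> new_window_roots n"
  shows "window w t' \<in> window_choices t w"
proof -
  have lw: "length w + d = Suc n" using w by (simp add: new_window_roots_def)
  have "window w t' \<in> patterns" using t' lw by (simp add: extensions_def admissible_def)
  moreover have "t (w @ u) = t' (w @ u)" if "length u < d - 1" for u
    using t' lw that by (auto simp: extensions_def prune_def)
  ultimately show ?thesis by (auto simp: window_choices_def prune_def psection_def)
qed

lemma glue_windows:
  assumes n: "d \<le> n" and t': "t' \<in> extensions n t"
  shows "glue n t (restrict (\<lambda>w. window w t') (new_window_roots n)) = t'"
proof
  fix u :: "bool list"
  consider "length u < n" | "length u = n" | "Suc n \<le> length u" by linarith
  then show "glue n t (restrict (\<lambda>w. window w t') (new_window_roots n)) u = t' u"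
  proof cases
    case 1
    then show ?thesis using t' by (auto simp: glue_def extensions_def prune_def)
  next
    case 2
    then have "take (Suc n - d) u \<in> new_window_roots n" and "length (drop (Suc n - d) u) < d"
      using n d_pos by (auto simp: new_window_roots_def)
    then show ?thesis using 2 by (simp add: glue_def prune_def psection_def)
  next
    case 3
    then show ?thesis using t' by (auto simp: glue_def extensions_def admissible_def portraits_below_def)
  qed
qed

lemma bij_betw_extensions:
  assumes n: "d \<le> n" and t: "t \<in> admissible n"
  shows "bij_betw (\<lambda>t'. restrict (\<lambda>w. window w t') (new_window_roots n))
    (extensions n t) (Pi\<^sub>E (new_window_roots n) (window_choices t))"
proof (rule bij_betw_byWitness[where f' = "glue n t"])
  show "\<forall>c\<in>Pi\<^sub>E (new_window_roots n) (window_choices t).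
      restrict (\<lambda>w. window w (glue n t c)) (new_window_roots n) = c"
    using window_glue[OF n] by (auto simp: PiE_def extensional_def fun_eq_iff)
qed (use glue_in_extensions[OF n t] glue_windows[OF n] window_in_window_choices[OF n] in auto)

lemma window_choices_nonempty:
  assumes "d \<le> n" and t: "t \<in> admissible n" and w: "w \<in> new_window_roots n"
  shows "window_choices t w \<noteq> {}"
proof -
  have lw: "length w = Suc (n - d)" using w \<open>d \<le> n\<close> by (simp add: new_window_roots_def)
  then obtain w' i where w': "w = w' @ [i]" by (metis length_Suc_conv_rev)
  then have "window w' t \<in> patterns" using t lw \<open>d \<le> n\<close> by (simp add: admissible_def)
  from patterns_essential[OF this, of i] obtain r where "r \<in> patterns"
    and "\<forall>u. length u < d - 1 \<longrightarrow> r u = window w' t (i # u)" by blast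
  then have "r \<in> window_choices t w"
    using w' w by (auto simp: window_choices_def prune_def psection_def new_window_roots_def)
  then show ?thesis by blast
qed

lemma extensions_nonempty:
  assumes "d \<le> n" and "t \<in> admissible n"
  shows "extensions n t \<noteq> {}"
proof -
  have "Pi\<^sub>E (new_window_roots n) (window_choices t) \<noteq> {}"
    using window_choices_nonempty[OF assms] by (simp add: PiE_eq_empty_iff)
  then show ?thesis using bij_betw_extensions[OF assms] by (auto simp: bij_betw_def)
qed

lemma card_window_choices:
  assumes "d \<le> n" and "t \<in> admissible n" and "w \<in> new_window_roots n"
  shows "card (window_choices t w) = stab_card"
proof -
  obtain r where r: "r \<in> window_choices t w" using window_choices_nonempty assms by blast
  then have "window_choices t w = {s \<in> patterns. \<forall>u. length u < d - 1 \<longrightarrow> s u = r u}"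
    by (auto simp: window_choices_def)
  then show ?thesis using r card_patterns_agreeing by (simp add: window_choices_def)
qed

lemma card_extensions:
  assumes "d \<le> n" and "t \<in> admissible n"
  shows "card (extensions n t) = stab_card ^ 2 ^ (Suc n - d)"
proof -
  have "card (extensions n t) = card (Pi\<^sub>E (new_window_roots n) (window_choices t))"
    using bij_betw_extensions[OF assms] by (rule bij_betw_same_card)
  also have "\<dots> = (\<Prod>w\<in>new_window_roots n. card (window_choices t w))"
    by (simp add: card_PiE finite_new_window_roots)
  also have "\<dots> = stab_card ^ 2 ^ (Suc n - d)"
    using assms by (simp add: card_window_choices card_new_window_roots)
  finally show ?thesis .
qed

lemma admissible_Suc: "admissible (Suc n) = (\<Union>t\<in>admissible n. extensions n t)"
proof -
  have "prune n t' \<in> admissible n" if "t' \<in> admissible (Suc n)" for t'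
    using that by (auto simp: admissible_def prune_psection_prune)
  then show ?thesis by (auto simp: extensions_def)
qed

lemma card_admissible_Suc:
  assumes "d \<le> n"
  shows "card (admissible (Suc n)) = card (admissible n) * stab_card ^ 2 ^ (Suc n - d)"
proof -
  have "card (admissible (Suc n)) = (\<Sum>t\<in>admissible n. card (extensions n t))"
    unfolding admissible_Suc
  proof (rule card_UN_disjoint)
    show "\<forall>t\<in>admissible n. finite (extensions n t)"
      using finite_admissible[of "Suc n"] by (auto simp: extensions_def intro: finite_subset[rotated])
  qed (auto simp: finite_admissible extensions_def)
  then show ?thesis using assms by (simp add: card_extensions)
qed

lemma card_admissible:
  assumes "d \<le> n"
  shows "card (admissible n) = card (admissible d) * stab_card ^ (2 ^ (n - (d - 1)) - 2)"
  using assms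
proof (induct n rule: dec_induct)
  case base
  then show ?case using d_pos by simp
next
  case (step n)
  have "Suc n - d = n - (d - 1)" using d_pos by simp
  moreover have "(2 :: nat) ^ 1 \<le> 2 ^ (n - (d - 1))" using step d_pos by (intro power_increasing) auto
  ultimately have "2 ^ (n - (d - 1)) - 2 + 2 ^ (Suc n - d) = 2 ^ (Suc n - (d - 1)) - (2 :: nat)"
    using d_pos step by (simp add: Suc_diff_le)
  then show ?case using step card_admissible_Suc[OF step(1)] by (simp add: power_add[symmetric])
qed

lemma admissible_subset_prune_GP_portraits:
  assumes n: "d \<le> n"
  shows "admissible n \<subseteq> prune n ` GP_portraits"
proof
  fix t assume t: "t \<in> admissible n"
  have "\<exists>seq. \<forall>j. (seq j \<in> admissible (n + j) \<and> (j = 0 \<longrightarrow> seq j = t))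
      \<and> prune (n + j) (seq (Suc j)) = seq j"
  proof (rule dependent_nat_choice)
    fix x j assume "x \<in> admissible (n + j) \<and> (j = 0 \<longrightarrow> x = t)"
    then obtain y where "y \<in> extensions (n + j) x" using extensions_nonempty n by fastforce
    then show "\<exists>y. (y \<in> admissible (n + Suc j) \<and> (Suc j = 0 \<longrightarrow> y = t)) \<and> prune (n + j) y = x"
      by (auto simp: extensions_def)
  qed (use t in simp)
  then obtain seq where adm: "\<And>j. seq j \<in> admissible (n + j)" and "seq 0 = t"
    and coh: "\<And>j. prune (n + j) (seq (Suc j)) = seq j" by blast
  define s where "s = (\<lambda>u. seq (Suc (length u)) u)"
  have lim: "prune (n + j) s = seq j" for j
    unfolding s_def using adm coh by (intro coherent_limit) (auto simp: admissible_def)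
  have "window w s \<in> patterns" for w
  proof -
    have "window w s = window w (prune (n + (length w + d)) s)" by (simp add: prune_psection_prune)
    then show ?thesis using adm[of "length w + d"] by (simp add: lim admissible_def)
  qed
  then have "s \<in> GP_portraits" by (simp add: GP_portraits_def)
  moreover have "prune n s = t" using lim[of 0] \<open>seq 0 = t\<close> by simp
  ultimately show "t \<in> prune n ` GP_portraits" by blast
qed

lemma card_restr_G_P: "d \<le> n \<Longrightarrow> card (restr n ` G_P d P) = card (admissible n)"
  using card_restr_G_P_eq prune_GP_portraits_subset admissible_subset_prune_GP_portraits
  by (metis subset_antisym)

end

theorem mainTheorem12:
  fixes d :: nat and P :: "(bool list \<Rightarrow> bool list) set"
  assumes "d \<ge> 1" and "essential_pattern d P"
  shows "Hdim (G_P d P) = ereal (log 2 (real (card (level_stab (d - 1) P))) / 2 ^ (d - 1))"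
proof -
  interpret essential_pattern_group d P using assms by unfold_locales
  have "card (restr n ` G_P d P) = card (admissible d) * stab_card ^ (2 ^ (n - (d - 1)) - 2)"
    if "d - 1 < n" for n
  proof -
    have "d \<le> n" using that assms(1) by simp
    then show ?thesis unfolding card_restr_G_P[OF \<open>d \<le> n\<close>] by (rule card_admissible)
  qed
  with card_admissible_pos stab_card_pos show ?thesis by (rule Hdim_eq_of_card_restr)
qed

end
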